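(* Obstacles are invariant under gauge transformations. Precisely, let $L\in K[D]$ with $\operatorname{Sym}_L=S_1\cdots S_k$ (homogeneous $S_i$), and let $g\in K$ be invertible. Let $I=(\operatorname{Sym}_L/S_1,\dots,\operatorname{Sym}_L/S_k)\subseteq K[X_1,\dots,X_n]$. Then the set of classes in $K[X_1,\dots,X_n]/I$ of the symbols of common obstacles to factorization of $L$ of type $(S_1)\cdots(S_k)$ equals the corresponding set for the operator $g^{-1}\circ L\circ g$, which has the same symbol and the same type.
   Context: $K$ is a field with commuting derivations $\partial_1,\dots,\partial_n$, and $K[D]=K[D_1,\dots,D_n]$ is the ring of linear differential operators over $K$: the $D_i$ commute with each other and $D_i\circ a=aD_i+\partial_i(a)$ for $a\in K$. Every $L\in K[D]$ is uniquely $\sum_{|J|\le d}a_JD^J$ with $a_J\in K$ and $D^J=D_1^{j_1}\cdots D_n^{j_n}$. The order $\operatorname{ord}(L)$ is the largest $|J|$ with $a_J\ne0$, and $\operatorname{ord}(0)=-\infty$. The symbol $\operatorname{Sym}_L=\sum_{|J|=\operatorname{ord}L}a_JX^J$, with $\operatorname{Sym}_0=0$. A factorization of type $(S_1)\cdots(S_k)$ of $M$ is $M=F_1\circ\cdots\circ F_k$ with $\operatorname{Sym}_{F_i}=S_i$. A common obstacle to factorization of $M$ of that type is an operator $R$ such that $M-R$ has such a factorization and $R$ has minimal possible order among such operators. The ring $K[X]/I$ is called the ring of obstacles. The class of the symbols of common obstacles in it is called the obstacle to factorization; these symbols lie in one class when the $S_i$ are pairwise coprime. *)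

theory Defs
  imports "HOL-Library.Poly_Mapping" "HOL-Library.Option_ord"
begin

(* Multi-indices J = (j_1,...,j_n) are finitely supported maps nat \<Rightarrow>\<^sub>0 nat
  (variable i < n corresponds to D_{i+1}, resp. X_{i+1}).
  Both linear differential operators  sum a_J D^J  and commutative polynomials
  sum a_J X^J  over K are represented as finitely supported coefficient maps
  (nat \<Rightarrow>\<^sub>0 nat) \<Rightarrow>\<^sub>0 K.  For polynomials, the library
  multiplication on this type is the ordinary (commutative) polynomial product;
  for operators we define the composition op_comp below. *)

type_synonym 'a mpoly = "(nat \<Rightarrow>\<^sub>0 nat) \<Rightarrow>\<^sub>0 'a"
type_synonym 'a diffop = "(nat \<Rightarrow>\<^sub>0 nat) \<Rightarrow>\<^sub>0 'a"

definition commuting_derivations :: "nat \<Rightarrow> (nat \<Rightarrow> 'a::field \<Rightarrow> 'a) \<Rightarrow> bool" where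
  "commuting_derivations n d \<longleftrightarrow>
     (\<forall>i<n. \<forall>a b. d i (a + b) = d i a + d i b) \<and>
     (\<forall>i<n. \<forall>a b. d i (a * b) = d i a * b + a * d i b) \<and>
     (\<forall>i<n. \<forall>j<n. \<forall>a. d i (d j a) = d j (d i a))"

definition in_vars :: "nat \<Rightarrow> 'a::zero mpoly \<Rightarrow> bool" where
  "in_vars n P \<longleftrightarrow> (\<forall>J\<in>Poly_Mapping.keys P. Poly_Mapping.keys J \<subseteq> {..<n})"

definition mdeg :: "(nat \<Rightarrow>\<^sub>0 nat) \<Rightarrow> nat" where
  "mdeg J = (\<Sum>i\<in>Poly_Mapping.keys J. Poly_Mapping.lookup J i)"

(* Order; None stands for -\<infinity> (order of 0), and None < Some m. *)
definition ord :: "'a::zero diffop \<Rightarrow> nat option" where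
  "ord L = (if L = 0 then None else Some (Max (mdeg ` Poly_Mapping.keys L)))"

definition Sym :: "'a::comm_monoid_add diffop \<Rightarrow> 'a mpoly" where
  "Sym L = (\<Sum>J\<in>{J\<in>Poly_Mapping.keys L. Some (mdeg J) = ord L}. Poly_Mapping.single J (Poly_Mapping.lookup L J))"

definition homogeneous :: "'a::zero mpoly \<Rightarrow> bool" where
  "homogeneous P \<longleftrightarrow> (\<exists>m. \<forall>J\<in>Poly_Mapping.keys P. mdeg J = m)"

definition dpow :: "(nat \<Rightarrow> 'a \<Rightarrow> 'a) \<Rightarrow> (nat \<Rightarrow>\<^sub>0 nat) \<Rightarrow> 'a \<Rightarrow> 'a" where
  "dpow d J = foldr (\<lambda>i f. (d i ^^ Poly_Mapping.lookup J i) \<circ> f) (sorted_list_of_set (Poly_Mapping.keys J)) id"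

definition mbinom :: "(nat \<Rightarrow>\<^sub>0 nat) \<Rightarrow> (nat \<Rightarrow>\<^sub>0 nat) \<Rightarrow> nat" where
  "mbinom J I = (\<Prod>i\<in>Poly_Mapping.keys J. Poly_Mapping.lookup J i choose Poly_Mapping.lookup I i)"

(* Composition in K[D]:
  (a D^J) \<circ> (b D^M) = sum over I \<le> J (componentwise) of a * binom(J,I) * \<partial>^(J-I)(b) D^(I+M). *)
definition op_comp :: "(nat \<Rightarrow> 'a::field \<Rightarrow> 'a) \<Rightarrow> 'a diffop \<Rightarrow> 'a diffop \<Rightarrow> 'a diffop" where
  "op_comp d L M =
     (\<Sum>J\<in>Poly_Mapping.keys L. \<Sum>M'\<in>Poly_Mapping.keys M. \<Sum>I\<in>{I. \<forall>i. Poly_Mapping.lookup I i \<le> Poly_Mapping.lookup J i}.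
        Poly_Mapping.single (I + M')
          (Poly_Mapping.lookup L J * of_nat (mbinom J I) * dpow d (J - I) (Poly_Mapping.lookup M M')))"

definition op_const :: "'a::zero \<Rightarrow> 'a diffop" where
  "op_const a = Poly_Mapping.single 0 a"

definition has_factorization ::
  "nat \<Rightarrow> (nat \<Rightarrow> 'a::field \<Rightarrow> 'a) \<Rightarrow> 'a mpoly list \<Rightarrow> 'a diffop \<Rightarrow> bool" where
  "has_factorization n d Ss M \<longleftrightarrow>
     (\<exists>Fs. length Fs = length Ss \<and> (\<forall>F\<in>set Fs. in_vars n F) \<and>
       (\<forall>i<length Ss. Sym (Fs ! i) = Ss ! i) \<and>
       M = foldr (op_comp d) Fs (op_const 1))"

definition common_obstacle ::
  "nat \<Rightarrow> (nat \<Rightarrow> 'a::field \<Rightarrow> 'a) \<Rightarrow> 'a mpoly list \<Rightarrow> 'a diffop \<Rightarrow> 'a diffop \<Rightarrow> bool" where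
  "common_obstacle n d Ss M R \<longleftrightarrow>
     in_vars n R \<and> has_factorization n d Ss (M - R) \<and>
     (\<forall>R'. in_vars n R' \<and> has_factorization n d Ss (M - R') \<longrightarrow> ord R \<le> ord R')"

(* The ideal I = (Sym_L/S_1, ..., Sym_L/S_k) of K[X_1..X_n], where Sym_L = S_1 \<cdots> S_k,
  so Sym_L/S_i = prod_{j \<noteq> i} S_j. *)
definition cofactor :: "'a::comm_ring_1 mpoly list \<Rightarrow> nat \<Rightarrow> 'a mpoly" where
  "cofactor Ss i = prod_list (take i Ss @ drop (Suc i) Ss)"

definition obstacle_ideal :: "nat \<Rightarrow> 'a::comm_ring_1 mpoly list \<Rightarrow> 'a mpoly set" where
  "obstacle_ideal n Ss =
     {P. \<exists>h. (\<forall>i<length Ss. in_vars n (h i)) \<and> P = (\<Sum>i<length Ss. h i * cofactor Ss i)}"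

definition obstacle_class :: "nat \<Rightarrow> 'a::comm_ring_1 mpoly list \<Rightarrow> 'a mpoly \<Rightarrow> 'a mpoly set" where
  "obstacle_class n Ss P = {Q. in_vars n Q \<and> P - Q \<in> obstacle_ideal n Ss}"

definition obstacle_classes ::
  "nat \<Rightarrow> (nat \<Rightarrow> 'a::field \<Rightarrow> 'a) \<Rightarrow> 'a mpoly list \<Rightarrow> 'a diffop \<Rightarrow> 'a mpoly set set" where
  "obstacle_classes n d Ss L = {obstacle_class n Ss (Sym R) | R. common_obstacle n d Ss L R}"

end

theory Submission
  imports Defs
begin

text \<open>Conjugation by a unit g is additive, multiplicative and invertible on K[D], and it fixes
orders and symbols: by Leibniz' rule g^-1 \<circ> D^J \<circ> g is D^J plus terms of lower order.
Applied factor by factor it therefore maps factorizations of a given type to factorizations of the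
same type, and common obstacles of L to common obstacles of g^-1 \<circ> L \<circ> g with the same
symbol; the inverse conjugation gives the reverse inclusion. Multiplicativity would need
associativity of composition; instead K[D] is made to act faithfully on formal power series,
where composition becomes composition of actions.\<close>

section \<open>Multi-indices\<close>

text \<open>Written with Suc 0, the simplifier normal form of 1, so that lemmas about it apply after simplification.\<close>

abbreviation unit_index :: "nat \<Rightarrow> (nat \<Rightarrow>\<^sub>0 nat)" where
  "unit_index i \<equiv> Poly_Mapping.single i (Suc 0)"

lemma keys_add_unit_index: "Poly_Mapping.keys (J + unit_index i) = insert i (Poly_Mapping.keys J)"
  by (auto simp: in_keys_iff lookup_add lookup_single when_def split: if_splits)

lemma lookup_add_unit_index:
  "Poly_Mapping.lookup (J + unit_index i) j = Poly_Mapping.lookup J j + (if i = j then 1 else 0)"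
  by (simp add: lookup_add lookup_single)

lemma poly_mapping_induct_keys [consumes 1, case_names zero step]:
  assumes "Poly_Mapping.keys J \<subseteq> A" "P 0"
    "\<And>J i. Poly_Mapping.keys J \<subseteq> A \<Longrightarrow> i \<in> A \<Longrightarrow> P J \<Longrightarrow> P (J + unit_index i)"
  shows "P J"
  using assms(1)
proof (induction J rule: Poly_Mapping.update_induct)
  case const show ?case by (rule assms(2))
next
  case (update f a b)
  have upd: "Poly_Mapping.update a b f = f + Poly_Mapping.single a b"
    by (rule poly_mapping_eqI) (use update.hyps in \<open>auto simp: lookup_update lookup_add lookup_single in_keys_iff when_def\<close>)
  have kf: "Poly_Mapping.keys f \<subseteq> A" and aA: "a \<in> A"
    using update.prems update.hyps by (auto simp: keys_update)
  have "P (f + Poly_Mapping.single a k)" for k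
  proof (induction k)
    case 0 show ?case using update.IH kf by simp
  next
    case (Suc k)
    have "Poly_Mapping.keys (f + Poly_Mapping.single a k) \<subseteq> A"
      using keys_add[of f "Poly_Mapping.single a k"] kf aA by (auto split: if_split_asm)
    from assms(3)[OF this aA Suc] show ?case
      by (simp add: single_add[symmetric] add.assoc)
  qed
  then show ?case using upd by simp
qed

section \<open>Iterated commuting maps\<close>

lemma dpow_zero [simp]: "dpow f 0 = id"
  unfolding dpow_def by simp

lemma foldr_comp_id: "foldr (\<lambda>x g. G x \<circ> g) xs id = foldr G xs"
  by (induction xs) auto

lemma dpow_apply:
  "dpow f J = foldr (\<lambda>i. f i ^^ Poly_Mapping.lookup J i) (sorted_list_of_set (Poly_Mapping.keys J))"
  unfolding dpow_def by (rule foldr_comp_id)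

lemma dpow_eq_fold:
  assumes "comp_fun_commute_on A f" "Poly_Mapping.keys J \<subseteq> A"
  shows "dpow f J a = Finite_Set.fold (\<lambda>i. f i ^^ Poly_Mapping.lookup J i) a (Poly_Mapping.keys J)"
proof -
  let ?G = "\<lambda>i. f i ^^ Poly_Mapping.lookup J i" and ?xs = "sorted_list_of_set (Poly_Mapping.keys J)"
  interpret G: comp_fun_commute_on A ?G
    using comp_fun_commute_on.comp_fun_commute_on_funpow[OF assms(1)] .
  have "foldr ?G ?xs = List.fold ?G ?xs"
    by (rule foldr_fold) (use assms(2) in \<open>auto intro: G.comp_fun_commute_on\<close>)
  moreover have "Finite_Set.fold ?G a (set ?xs) = List.fold ?G (remdups ?xs) a"
    by (rule G.fold_set_fold_remdups) (use assms(2) in auto)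
  ultimately show ?thesis by (simp add: dpow_apply distinct_remdups_id)
qed

lemma dpow_add_unit_index:
  assumes "comp_fun_commute_on A f" "i \<in> A" "Poly_Mapping.keys J \<subseteq> A"
  shows "dpow f (J + unit_index i) = f i \<circ> dpow f J"
proof
  fix a
  define K where "K = Poly_Mapping.keys J - {i}"
  let ?G = "\<lambda>J i. f i ^^ Poly_Mapping.lookup J i"
  have KA: "insert i K \<subseteq> A" and K: "finite K" "i \<notin> K" using assms by (auto simp: K_def)
  interpret G: comp_fun_commute_on A "?G J"
    using comp_fun_commute_on.comp_fun_commute_on_funpow[OF assms(1)] .
  interpret G': comp_fun_commute_on A "?G (J + unit_index i)"
    using comp_fun_commute_on.comp_fun_commute_on_funpow[OF assms(1)] .
  have "dpow f J a = Finite_Set.fold (?G J) a (insert i K)"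
  proof (cases "i \<in> Poly_Mapping.keys J")
    case True
    then show ?thesis using dpow_eq_fold[OF assms(1,3)] by (simp add: K_def insert_absorb)
  next
    case False
    then have "?G J i = id" by (simp add: in_keys_iff)
    then show ?thesis
      using dpow_eq_fold[OF assms(1,3)] False G.fold_insert[OF KA K] by (simp add: K_def)
  qed
  also have "\<dots> = ?G J i (Finite_Set.fold (?G J) a K)"
    by (rule G.fold_insert[OF KA K])
  finally have J: "dpow f J a = ?G J i (Finite_Set.fold (?G J) a K)" .
  have "dpow f (J + unit_index i) a = Finite_Set.fold (?G (J + unit_index i)) a (insert i K)"
    using dpow_eq_fold[OF assms(1), of "J + unit_index i"] assms
    unfolding keys_add_unit_index K_def insert_Diff_single by simp
  also have "\<dots> = ?G (J + unit_index i) i (Finite_Set.fold (?G (J + unit_index i)) a K)"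
    by (rule G'.fold_insert[OF KA K])
  also have "Finite_Set.fold (?G (J + unit_index i)) a K = Finite_Set.fold (?G J) a K"
    using KA K by (intro Finite_Set.fold_cong[OF G'.comp_fun_commute_on_axioms G.comp_fun_commute_on_axioms])
      (auto simp: lookup_add lookup_single when_def)
  finally show "dpow f (J + unit_index i) a = (f i \<circ> dpow f J) a"
    using J by (simp add: lookup_add)
qed

lemma dpow_add:
  assumes "comp_fun_commute_on A f" "Poly_Mapping.keys J \<subseteq> A" "Poly_Mapping.keys K \<subseteq> A"
  shows "dpow f (J + K) = dpow f J \<circ> dpow f K"
  using assms(2)
proof (induction J rule: poly_mapping_induct_keys)
  case zero then show ?case by simp
next
  case (step J i)
  have JK: "Poly_Mapping.keys (J + K) \<subseteq> A" using keys_add[of J K] step assms(3) by auto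
  have "dpow f (J + unit_index i + K) = dpow f ((J + K) + unit_index i)"
    by (simp only: ac_simps)
  also have "\<dots> = f i \<circ> dpow f J \<circ> dpow f K"
    using dpow_add_unit_index[OF assms(1) step(2) JK] step.IH by (simp only: comp_assoc)
  also have "\<dots> = dpow f (J + unit_index i) \<circ> dpow f K"
    using dpow_add_unit_index[OF assms(1) step(2,1)] by simp
  finally show ?case .
qed

section \<open>Componentwise order and multinomial coefficients\<close>

definition below :: "(nat \<Rightarrow>\<^sub>0 nat) \<Rightarrow> (nat \<Rightarrow>\<^sub>0 nat) set" where
  "below J = {I. \<forall>i. Poly_Mapping.lookup I i \<le> Poly_Mapping.lookup J i}"

lemma below_zero [simp]: "below 0 = {0}"
  unfolding below_def by (auto intro: poly_mapping_eqI)

lemma below_refl: "J \<in> below J"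
  unfolding below_def by simp

lemma below_subset_add: "below J \<subseteq> below (J + K)"
  unfolding below_def by (auto simp: lookup_add intro: le_add1 order_trans)

lemma keys_subset_below: "I \<in> below J \<Longrightarrow> Poly_Mapping.keys I \<subseteq> Poly_Mapping.keys J"
  unfolding below_def by (auto simp: in_keys_iff) (metis gr0I leD)

lemma diff_add_below: "I \<in> below J \<Longrightarrow> J + K - I = (J - I) + K"
  by (rule poly_mapping_eqI) (auto simp: lookup_add lookup_minus below_def)

lemma image_add_unit_index_below:
  "(\<lambda>I. I + unit_index i) ` below J = {U \<in> below (J + unit_index i). 0 < Poly_Mapping.lookup U i}"
proof (intro equalityI subsetI)
  fix U assume "U \<in> {U \<in> below (J + unit_index i). 0 < Poly_Mapping.lookup U i}"
  then have le: "\<And>j. Poly_Mapping.lookup U j \<le> Poly_Mapping.lookup J j + (if i = j then 1 else 0)"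
    and pos: "0 < Poly_Mapping.lookup U i"
    by (auto simp: below_def lookup_add_unit_index)
  have "U = (U - unit_index i) + unit_index i"
    by (rule poly_mapping_eqI) (use pos in \<open>auto simp: lookup_add_unit_index lookup_minus lookup_single\<close>)
  moreover have "U - unit_index i \<in> below J"
    unfolding below_def
  proof (intro CollectI allI)
    fix j show "Poly_Mapping.lookup (U - unit_index i) j \<le> Poly_Mapping.lookup J j"
      using le[of j] by (auto simp: lookup_minus lookup_single when_def split: if_splits)
  qed
  ultimately show "U \<in> (\<lambda>I. I + unit_index i) ` below J" by blast
qed (auto simp: below_def lookup_add_unit_index)

lemma below_add_unit_index:
  "below (J + unit_index i) = below J \<union> (\<lambda>I. I + unit_index i) ` below J"
proof (intro equalityI subsetI)
  fix U assume U: "U \<in> below (J + unit_index i)"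
  show "U \<in> below J \<union> (\<lambda>I. I + unit_index i) ` below J"
  proof (cases "Poly_Mapping.lookup U i = 0")
    case True
    have "U \<in> below J"
      unfolding below_def
    proof (intro CollectI allI)
      fix j
      have "Poly_Mapping.lookup U j \<le> Poly_Mapping.lookup (J + unit_index i) j"
        using U unfolding below_def by blast
      then show "Poly_Mapping.lookup U j \<le> Poly_Mapping.lookup J j"
        using True by (cases "i = j") (auto simp: lookup_add_unit_index)
    qed
    then show ?thesis by simp
  next
    case False
    with U show ?thesis unfolding image_add_unit_index_below by simp
  qed
qed (use below_subset_add image_add_unit_index_below in blast)+

lemma finite_below: "finite (below J)"
  using subset_UNIV
  by (induction J rule: poly_mapping_induct_keys) (auto simp: below_add_unit_index)

lemma mdeg_eq_sum:
  "finite S \<Longrightarrow> Poly_Mapping.keys J \<subseteq> S \<Longrightarrow> mdeg J = (\<Sum>i\<in>S. Poly_Mapping.lookup J i)"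
  unfolding mdeg_def by (rule sum.mono_neutral_left) (auto simp: in_keys_iff)

lemma mdeg_le_below: "I \<in> below J \<Longrightarrow> mdeg I \<le> mdeg J"
  using mdeg_eq_sum[of "Poly_Mapping.keys J" I] mdeg_eq_sum[of "Poly_Mapping.keys J" J]
  by (simp add: keys_subset_below sum_mono below_def)

lemma below_eq_of_mdeg_le:
  assumes "I \<in> below J" "mdeg J \<le> mdeg I"
  shows "I = J"
proof (rule poly_mapping_eqI, rule ccontr)
  fix i assume ne: "Poly_Mapping.lookup I i \<noteq> Poly_Mapping.lookup J i"
  have le: "\<And>j. Poly_Mapping.lookup I j \<le> Poly_Mapping.lookup J j" using assms(1) by (simp add: below_def)
  with ne have lt: "Poly_Mapping.lookup I i < Poly_Mapping.lookup J i" by (simp add: order_less_le)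
  then have "i \<in> Poly_Mapping.keys J" by (simp add: in_keys_iff)
  then have "(\<Sum>j\<in>Poly_Mapping.keys J. Poly_Mapping.lookup I j) < (\<Sum>j\<in>Poly_Mapping.keys J. Poly_Mapping.lookup J j)"
    using le lt by (intro sum_strict_mono_ex1) auto
  then show False
    using assms mdeg_eq_sum[of "Poly_Mapping.keys J" I] mdeg_eq_sum[of "Poly_Mapping.keys J" J]
    by (simp add: keys_subset_below)
qed

text \<open>Over a fixed finite index set, Pascal's rule needs no case split on the keys of J.\<close>

definition mbinom_on :: "nat set \<Rightarrow> (nat \<Rightarrow>\<^sub>0 nat) \<Rightarrow> (nat \<Rightarrow>\<^sub>0 nat) \<Rightarrow> nat" where
  "mbinom_on S J I = (\<Prod>j\<in>S. Poly_Mapping.lookup J j choose Poly_Mapping.lookup I j)"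

lemma mbinom_on_eq_mbinom:
  assumes "finite S" "Poly_Mapping.keys J \<subseteq> S" "I \<in> below J"
  shows "mbinom_on S J I = mbinom J I"
  unfolding mbinom_on_def mbinom_def
proof (rule prod.mono_neutral_right[OF assms(1,2)], rule ballI)
  fix j assume "j \<in> S - Poly_Mapping.keys J"
  moreover have "Poly_Mapping.lookup I j \<le> Poly_Mapping.lookup J j"
    using assms(3) by (simp add: below_def)
  ultimately show "(Poly_Mapping.lookup J j choose Poly_Mapping.lookup I j) = 1"
    by (simp add: in_keys_iff)
qed

lemma mbinom_refl [simp]: "mbinom J J = 1"
  unfolding mbinom_def by simp

lemma mbinom_on_add_unit_index:
  assumes "finite S" "i \<in> S"
  shows "mbinom_on S (J + unit_index i) U = mbinom_on S J U
    + (if 0 < Poly_Mapping.lookup U i then mbinom_on S J (U - unit_index i) else 0)"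
proof -
  let ?rest = "\<lambda>X V. \<Prod>j\<in>S - {i}. Poly_Mapping.lookup X j choose Poly_Mapping.lookup V j"
  have split: "mbinom_on S X V = (Poly_Mapping.lookup X i choose Poly_Mapping.lookup V i) * ?rest X V" for X V
    unfolding mbinom_on_def by (rule prod.remove[OF assms])
  have "?rest (J + unit_index i) U = ?rest J U" "?rest J (U - unit_index i) = ?rest J U"
    by (auto intro!: prod.cong simp: lookup_add_unit_index lookup_minus lookup_single)
  then show ?thesis
    unfolding split[of "J + unit_index i"] split[of J] 
    by (cases "Poly_Mapping.lookup U i") (simp_all add: lookup_add_unit_index lookup_minus algebra_simps)
qed

lemma mbinom_on_eq_0_if_not_below:
  assumes "finite S" "i \<in> S" "U \<in> below (J + unit_index i) - below J"
  shows "mbinom_on S J U = 0"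
proof -
  obtain j where j: "Poly_Mapping.lookup J j < Poly_Mapping.lookup U j"
    using assms(3) by (auto simp: below_def not_le)
  moreover have "Poly_Mapping.lookup U j \<le> Poly_Mapping.lookup (J + unit_index i) j"
    using assms(3) by (simp add: below_def)
  ultimately have "j = i" by (cases "i = j") (auto simp: lookup_add_unit_index)
  with j assms(1,2) show ?thesis unfolding mbinom_on_def by (auto intro!: prod_zero)
qed

lemma sum_below_add_unit_index:
  fixes h :: "(nat \<Rightarrow>\<^sub>0 nat) \<Rightarrow> 'b::comm_semiring_1"
  assumes "finite S" "i \<in> S"
  shows "(\<Sum>U\<in>below (J + unit_index i). of_nat (mbinom_on S (J + unit_index i) U) * h U)
    = (\<Sum>I\<in>below J. of_nat (mbinom_on S J I) * h I)
      + (\<Sum>I\<in>below J. of_nat (mbinom_on S J I) * h (I + unit_index i))"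
proof -
  let ?B = "below (J + unit_index i)"
  have "(\<Sum>U\<in>?B. of_nat (mbinom_on S J U) * h U) = (\<Sum>I\<in>below J. of_nat (mbinom_on S J I) * h I)"
    using mbinom_on_eq_0_if_not_below[OF assms]
    by (intro sum.mono_neutral_right finite_below below_subset_add) auto
  moreover have "(\<Sum>U\<in>?B. if 0 < Poly_Mapping.lookup U i then of_nat (mbinom_on S J (U - unit_index i)) * h U else 0)
      = (\<Sum>I\<in>below J. of_nat (mbinom_on S J I) * h (I + unit_index i))"
  proof -
    have "(\<Sum>U\<in>?B. if 0 < Poly_Mapping.lookup U i then of_nat (mbinom_on S J (U - unit_index i)) * h U else 0)
        = (\<Sum>U\<in>(\<lambda>I. I + unit_index i) ` below J. of_nat (mbinom_on S J (U - unit_index i)) * h U)"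
      unfolding image_add_unit_index_below by (rule sum.inter_filter[OF finite_below, symmetric])
    also have "\<dots> = (\<Sum>I\<in>below J. of_nat (mbinom_on S J I) * h (I + unit_index i))"
      by (subst sum.reindex) (auto simp: inj_on_def)
    finally show ?thesis .
  qed
  ultimately show ?thesis
    by (simp add: mbinom_on_add_unit_index[OF assms] distrib_right sum.distrib if_distrib[of of_nat]
        if_distrib[of "\<lambda>x. x * _"] cong: if_cong)
qed

lemma keys_sum_subset:
  "(\<And>x. x \<in> T \<Longrightarrow> Poly_Mapping.keys (f x) \<subseteq> X) \<Longrightarrow> Poly_Mapping.keys (sum f T) \<subseteq> X"
  using keys_sum[of f T] by blast

lemma in_vars_keys: "in_vars n L \<Longrightarrow> J \<in> Poly_Mapping.keys L \<Longrightarrow> Poly_Mapping.keys J \<subseteq> {..<n}"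
  unfolding in_vars_def by auto

lemma in_vars_op_const: "in_vars n (op_const a)"
  unfolding in_vars_def op_const_def by auto

lemma in_vars_diff: "in_vars n A \<Longrightarrow> in_vars n B \<Longrightarrow> in_vars n (A - B)"
  unfolding in_vars_def using keys_diff[of A B] by blast

lemma in_vars_op_comp:
  assumes "in_vars n A" "in_vars n B"
  shows "in_vars n (op_comp d A B)"
proof -
  have "Poly_Mapping.keys (Poly_Mapping.single (I + M) c) \<subseteq> {K. Poly_Mapping.keys K \<subseteq> {..<n}}"
    if "J \<in> Poly_Mapping.keys A" "M \<in> Poly_Mapping.keys B" "I \<in> below J" for J M I and c :: 'a
    using keys_add[of I M] keys_subset_below[OF that(3)] in_vars_keys[OF assms(1) that(1)]
      in_vars_keys[OF assms(2) that(2)] by auto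
  then have "Poly_Mapping.keys (op_comp d A B) \<subseteq> {K. Poly_Mapping.keys K \<subseteq> {..<n}}"
    unfolding op_comp_def below_def[symmetric] by (intro keys_sum_subset) blast
  then show ?thesis unfolding in_vars_def by auto
qed

lemma in_vars_foldr_op_comp:
  "\<forall>F\<in>set Fs. in_vars n F \<Longrightarrow> in_vars n (foldr (op_comp d) Fs (op_const 1))"
  by (induction Fs) (auto intro: in_vars_op_comp in_vars_op_const)

lemma ord_eq_Some_iff:
  "ord A = Some m \<longleftrightarrow> (\<exists>J\<in>Poly_Mapping.keys A. mdeg J = m) \<and> (\<forall>J\<in>Poly_Mapping.keys A. mdeg J \<le> m)"
  by (cases "A = 0") (auto simp: ord_def Max_eq_iff)

lemma ord_Sym_eq_if_top_eq:
  assumes "ord A = Some m" "\<forall>J\<in>Poly_Mapping.keys B. mdeg J \<le> m"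
    "\<And>P. m \<le> mdeg P \<Longrightarrow> Poly_Mapping.lookup B P = Poly_Mapping.lookup A P"
  shows "ord B = ord A" "Sym B = Sym A"
proof -
  have top: "{J \<in> Poly_Mapping.keys B. mdeg J = m} = {J \<in> Poly_Mapping.keys A. mdeg J = m}"
    using assms(3) by (auto simp: in_keys_iff)
  have "ord B = Some m"
    using assms(1,2) top unfolding ord_eq_Some_iff by (metis (mono_tags, lifting) mem_Collect_eq)
  with assms(1) show B: "ord B = ord A" by simp
  show "Sym B = Sym A"
    unfolding Sym_def B assms(1) using top assms(3) by (auto intro!: sum.cong)
qed

lemma inverse_mult_cancel:
  fixes g :: "'a::field"
  shows "g \<noteq> 0 \<Longrightarrow> g * (inverse g * x) = x" "g \<noteq> 0 \<Longrightarrow> inverse g * (g * x) = x"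
  by (simp_all add: mult.assoc[symmetric])

section \<open>Commuting derivations and the power series module\<close>

locale comm_diff_field =
  fixes n :: nat and d :: "nat \<Rightarrow> 'a::field \<Rightarrow> 'a"
  assumes commuting_derivations: "commuting_derivations n d"
begin

lemma deriv_add: "i < n \<Longrightarrow> d i (a + b) = d i a + d i b"
  and deriv_mult: "i < n \<Longrightarrow> d i (a * b) = d i a * b + a * d i b"
  and deriv_commute: "i < n \<Longrightarrow> j < n \<Longrightarrow> d i (d j a) = d j (d i a)"
  using commuting_derivations unfolding commuting_derivations_def by blast+

lemma deriv_0: "i < n \<Longrightarrow> d i 0 = 0"
  using deriv_add[of i 0 0] by (metis add.right_neutral add_left_cancel)

lemma deriv_1: "i < n \<Longrightarrow> d i 1 = 0"
  using deriv_mult[of i 1 1] by (metis add.right_neutral add_left_cancel mult_1_left mult_1_right)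

lemma deriv_sum: "i < n \<Longrightarrow> d i (\<Sum>x\<in>S. f x) = (\<Sum>x\<in>S. d i (f x))"
  by (induction S rule: infinite_finite_induct) (auto simp: deriv_0 deriv_add)

lemma deriv_of_nat: "i < n \<Longrightarrow> d i (of_nat k) = 0"
  by (induction k) (auto simp: deriv_0 deriv_1 deriv_add)

lemma comp_fun_commute_on_deriv: "comp_fun_commute_on {..<n} d"
  by unfold_locales (auto simp: deriv_commute)

text \<open>A function v stands for the series \<Sum> v(M) t^M / M! in K[[t_1, \<dots>, t_n]], on which D_i
acts as the derivation d_i + \<partial>/\<partial>t_i. This module is faithful (series_action_inject) and
turns op_comp into composition (series_action_op_comp).\<close>

definition series_deriv :: "nat \<Rightarrow> ((nat \<Rightarrow>\<^sub>0 nat) \<Rightarrow> 'a) \<Rightarrow> (nat \<Rightarrow>\<^sub>0 nat) \<Rightarrow> 'a" where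
  "series_deriv i v = (\<lambda>M. d i (v M) + v (M + unit_index i))"

lemma comp_fun_commute_on_series_deriv: "comp_fun_commute_on {..<n} series_deriv"
  by unfold_locales (auto simp: series_deriv_def deriv_add deriv_commute ac_simps)

lemma series_deriv_sum:
  "i < n \<Longrightarrow> series_deriv i (\<lambda>M. \<Sum>t\<in>T. v t M) = (\<lambda>M. \<Sum>t\<in>T. series_deriv i (v t) M)"
  by (simp add: series_deriv_def deriv_sum sum.distrib)

lemma dpow_series_deriv_sum:
  assumes "Poly_Mapping.keys J \<subseteq> {..<n}"
  shows "dpow series_deriv J (\<lambda>M. \<Sum>t\<in>T. f t M) = (\<lambda>M. \<Sum>t\<in>T. dpow series_deriv J (f t) M)"
  using assms
proof (induction J arbitrary: f rule: poly_mapping_induct_keys)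
  case zero then show ?case by simp
next
  case (step J i)
  then show ?case
    using dpow_add_unit_index[OF comp_fun_commute_on_series_deriv] by (simp add: series_deriv_sum)
qed

lemma dpow_deriv_add_unit_index_diff:
  assumes "i < n" "Poly_Mapping.keys J \<subseteq> {..<n}" "I \<in> below J"
  shows "d i (dpow d (J - I) b) = dpow d (J + unit_index i - I) b"
proof -
  have "Poly_Mapping.keys (J - I) \<subseteq> Poly_Mapping.keys J"
    by (auto simp: in_keys_iff lookup_minus)
  with assms(2) have "Poly_Mapping.keys (J - I) \<subseteq> {..<n}" by blast
  then show ?thesis
    using dpow_add_unit_index[OF comp_fun_commute_on_deriv, of i "J - I"] assms
    by (simp add: diff_add_below)
qed

lemma leibniz:
  assumes "Poly_Mapping.keys J \<subseteq> {..<n}"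
  shows "dpow series_deriv J (\<lambda>M. b * w M) = (\<lambda>M. \<Sum>I\<in>below J.
    of_nat (mbinom_on {..<n} J I) * (dpow d (J - I) b * dpow series_deriv I w M))"
  using assms
proof (induction J rule: poly_mapping_induct_keys)
  case zero
  show ?case by (simp add: mbinom_on_def)
next
  case (step J i)
  let ?c = "\<lambda>I. of_nat (mbinom_on {..<n} J I) :: 'a"
  let ?X = "\<lambda>I. dpow series_deriv I w"
  have kI: "Poly_Mapping.keys I \<subseteq> {..<n}" if "I \<in> below J" for I
    using keys_subset_below[OF that] step(1) by blast
  have "dpow series_deriv (J + unit_index i) (\<lambda>M. b * w M)
      = series_deriv i (\<lambda>M. \<Sum>I\<in>below J. ?c I * (dpow d (J - I) b * ?X I M))"
    using dpow_add_unit_index[OF comp_fun_commute_on_series_deriv] step by simp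
  also have "\<dots> = (\<lambda>M. (\<Sum>I\<in>below J. ?c I * (dpow d (J + unit_index i - I) b * ?X I M))
      + (\<Sum>I\<in>below J. ?c I * (dpow d (J - I) b * ?X (I + unit_index i) M)))"
  proof
    fix M
    have dX: "d i (?X I M) + ?X I (M + unit_index i) = ?X (I + unit_index i) M" if "I \<in> below J" for I
      using dpow_add_unit_index[OF comp_fun_commute_on_series_deriv step(2) kI[OF that]]
      by (simp add: series_deriv_def)
    have "series_deriv i (\<lambda>M. \<Sum>I\<in>below J. ?c I * (dpow d (J - I) b * ?X I M)) M
      = (\<Sum>I\<in>below J. ?c I * (d i (dpow d (J - I) b) * ?X I M))
        + (\<Sum>I\<in>below J. ?c I * (dpow d (J - I) b * (d i (?X I M) + ?X I (M + unit_index i))))"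
      using step(2)
      by (simp add: series_deriv_def deriv_sum deriv_mult deriv_of_nat sum.distrib algebra_simps)
    also have "\<dots> = (\<Sum>I\<in>below J. ?c I * (dpow d (J + unit_index i - I) b * ?X I M))
        + (\<Sum>I\<in>below J. ?c I * (dpow d (J - I) b * ?X (I + unit_index i) M))"
      using step(1,2) dX by (simp add: dpow_deriv_add_unit_index_diff)
    finally show "series_deriv i (\<lambda>M. \<Sum>I\<in>below J. ?c I * (dpow d (J - I) b * ?X I M)) M
      = (\<Sum>I\<in>below J. ?c I * (dpow d (J + unit_index i - I) b * ?X I M))
        + (\<Sum>I\<in>below J. ?c I * (dpow d (J - I) b * ?X (I + unit_index i) M))" .
  qed
  also have "\<dots> = (\<lambda>M. \<Sum>U\<in>below (J + unit_index i).
      of_nat (mbinom_on {..<n} (J + unit_index i) U) * (dpow d (J + unit_index i - U) b * ?X U M))"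
    using step(2) by (simp add: sum_below_add_unit_index)
  finally show ?case .
qed

definition series_action :: "'a diffop \<Rightarrow> ((nat \<Rightarrow>\<^sub>0 nat) \<Rightarrow> 'a) \<Rightarrow> (nat \<Rightarrow>\<^sub>0 nat) \<Rightarrow> 'a" where
  "series_action L v = (\<lambda>M. \<Sum>J\<in>Poly_Mapping.keys L. Poly_Mapping.lookup L J * dpow series_deriv J v M)"

lemma series_action_eq_sum:
  assumes "finite S" "Poly_Mapping.keys L \<subseteq> S"
  shows "series_action L v M = (\<Sum>J\<in>S. Poly_Mapping.lookup L J * dpow series_deriv J v M)"
  unfolding series_action_def by (rule sum.mono_neutral_left[OF assms]) (auto simp: in_keys_iff)

lemma series_action_add: "series_action (A + B) v M = series_action A v M + series_action B v M"
  and series_action_diff: "series_action (A - B) v M = series_action A v M - series_action B v M"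
  using keys_add[of A B] keys_diff[of A B]
  by (simp_all add: series_action_eq_sum[of "Poly_Mapping.keys A \<union> Poly_Mapping.keys B"]
      lookup_add lookup_minus distrib_right left_diff_distrib sum.distrib sum_subtractf)

lemma series_action_sum: "series_action (\<Sum>t\<in>T. A t) v M = (\<Sum>t\<in>T. series_action (A t) v M)"
proof (induction T rule: infinite_finite_induct)
  case (infinite T) then show ?case by (simp add: series_action_def)
next
  case empty then show ?case by (simp add: series_action_def)
next
  case (insert t T) then show ?case by (simp add: series_action_add)
qed

lemma series_action_single: "series_action (Poly_Mapping.single K c) v M = c * dpow series_deriv K v M"
  unfolding series_action_def by (cases "c = 0") auto

lemma series_action_op_const: "series_action (op_const a) v = (\<lambda>M. a * v M)"
  unfolding op_const_def by (rule ext) (simp add: series_action_single)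

lemma series_action_op_comp:
  assumes A: "in_vars n A" and B: "in_vars n B"
  shows "series_action (op_comp d A B) v = series_action A (series_action B v)"
proof
  fix M
  let ?a = "Poly_Mapping.lookup A" and ?b = "Poly_Mapping.lookup B" and ?D = "dpow series_deriv"
  have "series_action (op_comp d A B) v M = (\<Sum>J\<in>Poly_Mapping.keys A. \<Sum>M'\<in>Poly_Mapping.keys B. \<Sum>I\<in>below J.
      ?a J * of_nat (mbinom J I) * dpow d (J - I) (?b M') * ?D (I + M') v M)"
    unfolding op_comp_def below_def[symmetric] by (simp add: series_action_sum series_action_single)
  also have "\<dots> = (\<Sum>J\<in>Poly_Mapping.keys A. ?a J * (\<Sum>M'\<in>Poly_Mapping.keys B. \<Sum>I\<in>below J.
      of_nat (mbinom_on {..<n} J I) * (dpow d (J - I) (?b M') * ?D I (?D M' v) M)))"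
  proof (intro sum.cong refl, unfold sum_distrib_left, intro sum.cong refl)
    fix J M' I assume J: "J \<in> Poly_Mapping.keys A" and M': "M' \<in> Poly_Mapping.keys B" and I: "I \<in> below J"
    have "?D (I + M') = ?D I \<circ> ?D M'"
      using keys_subset_below[OF I] in_vars_keys[OF A J] in_vars_keys[OF B M']
      by (intro dpow_add[OF comp_fun_commute_on_series_deriv]) auto
    moreover have "mbinom_on {..<n} J I = mbinom J I"
      using in_vars_keys[OF A J] I by (intro mbinom_on_eq_mbinom) auto
    ultimately show "?a J * of_nat (mbinom J I) * dpow d (J - I) (?b M') * ?D (I + M') v M
      = ?a J * (of_nat (mbinom_on {..<n} J I) * (dpow d (J - I) (?b M') * ?D I (?D M' v) M))"
      by (simp add: mult.assoc)
  qed
  also have "\<dots> = (\<Sum>J\<in>Poly_Mapping.keys A. ?a J * ?D J (\<lambda>N. \<Sum>M'\<in>Poly_Mapping.keys B. ?b M' * ?D M' v N) M)"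
    by (intro sum.cong refl) (simp add: in_vars_keys[OF A] dpow_series_deriv_sum leibniz)
  also have "\<dots> = series_action A (series_action B v) M"
    unfolding series_action_def ..
  finally show "series_action (op_comp d A B) v M = series_action A (series_action B v) M" .
qed

lemma dpow_series_deriv_delta:
  assumes "Poly_Mapping.keys J \<subseteq> {..<n}"
  shows "dpow series_deriv J (\<lambda>M. if M = P then 1 else 0) = (\<lambda>M. if M + J = P then 1 else 0)"
  using assms
proof (induction J rule: poly_mapping_induct_keys)
  case zero then show ?case by simp
next
  case (step J i)
  have "dpow series_deriv (J + unit_index i) (\<lambda>M. if M = P then 1 else 0)
      = series_deriv i (\<lambda>M. if M + J = P then 1 else 0)"
    using dpow_add_unit_index[OF comp_fun_commute_on_series_deriv step(2,1)] step.IH by simp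
  also have "\<dots> = (\<lambda>M. if M + (J + unit_index i) = P then 1 else 0)"
    using step(2) by (auto simp: series_deriv_def deriv_0 deriv_1 ac_simps)
  finally show ?case .
qed

lemma series_action_delta:
  assumes "in_vars n L"
  shows "series_action L (\<lambda>M. if M = P then 1 else 0) 0 = Poly_Mapping.lookup L P"
proof -
  have "series_action L (\<lambda>M. if M = P then 1 else 0) 0
      = (\<Sum>J\<in>Poly_Mapping.keys L. if J = P then Poly_Mapping.lookup L J else 0)"
    unfolding series_action_def
    by (intro sum.cong refl) (simp add: dpow_series_deriv_delta in_vars_keys[OF assms])
  then show ?thesis by (simp add: in_keys_iff)
qed

lemma series_action_inject:
  assumes "in_vars n A" "in_vars n B" "\<And>v. series_action A v = series_action B v"
  shows "A = B"
  by (rule poly_mapping_eqI) (metis series_action_delta assms)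

section \<open>Gauge transformations\<close>

definition gauge :: "'a \<Rightarrow> 'a diffop \<Rightarrow> 'a diffop" where
  "gauge g L = op_comp d (op_const (inverse g)) (op_comp d L (op_const g))"

lemma in_vars_gauge: "in_vars n L \<Longrightarrow> in_vars n (gauge g L)"
  unfolding gauge_def by (intro in_vars_op_comp in_vars_op_const)

lemma series_action_gauge:
  "in_vars n L \<Longrightarrow> series_action (gauge g L) v = (\<lambda>M. inverse g * series_action L (\<lambda>N. g * v N) M)"
  unfolding gauge_def by (simp add: series_action_op_comp in_vars_op_comp in_vars_op_const series_action_op_const)

lemma gauge_op_comp:
  assumes "g \<noteq> 0" "in_vars n F" "in_vars n G"
  shows "gauge g (op_comp d F G) = op_comp d (gauge g F) (gauge g G)"
  using assms
  by (intro series_action_inject)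
    (simp_all add: series_action_gauge series_action_op_comp in_vars_gauge in_vars_op_comp inverse_mult_cancel)

lemma gauge_op_const_1: "g \<noteq> 0 \<Longrightarrow> gauge g (op_const 1) = op_const 1"
  by (intro series_action_inject)
    (simp_all add: series_action_gauge in_vars_gauge in_vars_op_const series_action_op_const inverse_mult_cancel)

lemma gauge_diff:
  assumes "in_vars n A" "in_vars n B"
  shows "gauge g (A - B) = gauge g A - gauge g B"
  using assms
  by (intro series_action_inject)
    (simp_all add: series_action_gauge series_action_diff in_vars_gauge in_vars_diff fun_eq_iff
      right_diff_distrib)

lemma gauge_inverse_gauge:
  assumes "g \<noteq> 0" "in_vars n L"
  shows "gauge (inverse g) (gauge g L) = L"
  using assms
  by (intro series_action_inject) (simp_all add: series_action_gauge in_vars_gauge inverse_mult_cancel)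

lemma gauge_foldr_op_comp:
  assumes "g \<noteq> 0" "\<forall>F\<in>set Fs. in_vars n F"
  shows "gauge g (foldr (op_comp d) Fs (op_const 1)) = foldr (op_comp d) (map (gauge g) Fs) (op_const 1)"
  using assms(2)
  by (induction Fs) (simp_all add: gauge_op_const_1[OF assms(1)] gauge_op_comp[OF assms(1)] in_vars_foldr_op_comp)

lemma dpow_series_deriv_mult_delta:
  assumes "Poly_Mapping.keys J \<subseteq> {..<n}"
  shows "dpow series_deriv J (\<lambda>M. g * (if M = P then 1 else 0)) 0
    = (if P \<in> below J then of_nat (mbinom J P) * dpow d (J - P) g else 0)"
proof -
  have "dpow series_deriv J (\<lambda>M. g * (if M = P then 1 else 0)) 0
      = (\<Sum>I\<in>below J. if I = P then of_nat (mbinom_on {..<n} J I) * dpow d (J - I) g else 0)"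
    unfolding leibniz[OF assms]
  proof (intro sum.cong refl)
    fix I assume "I \<in> below J"
    with assms have "Poly_Mapping.keys I \<subseteq> {..<n}" using keys_subset_below by blast
    then show "of_nat (mbinom_on {..<n} J I) * (dpow d (J - I) g
        * dpow series_deriv I (\<lambda>M. if M = P then 1 else 0) 0)
      = (if I = P then of_nat (mbinom_on {..<n} J I) * dpow d (J - I) g else 0)"
      by (simp add: dpow_series_deriv_delta)
  qed
  also have "\<dots> = (if P \<in> below J then of_nat (mbinom J P) * dpow d (J - P) g else 0)"
    using assms by (simp add: finite_below mbinom_on_eq_mbinom)
  finally show ?thesis .
qed

lemma lookup_gauge:
  assumes "in_vars n R"
  shows "Poly_Mapping.lookup (gauge g R) P = inverse g * (\<Sum>J\<in>Poly_Mapping.keys R.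
    if P \<in> below J then Poly_Mapping.lookup R J * of_nat (mbinom J P) * dpow d (J - P) g else 0)"
proof -
  have "Poly_Mapping.lookup (gauge g R) P = inverse g * (\<Sum>J\<in>Poly_Mapping.keys R.
      Poly_Mapping.lookup R J * dpow series_deriv J (\<lambda>M. g * (if M = P then 1 else 0)) 0)"
    unfolding series_action_delta[OF in_vars_gauge[OF assms], of g P, symmetric]
    by (simp only: series_action_gauge[OF assms]) (simp add: series_action_def)
  also have "\<dots> = inverse g * (\<Sum>J\<in>Poly_Mapping.keys R.
      if P \<in> below J then Poly_Mapping.lookup R J * of_nat (mbinom J P) * dpow d (J - P) g else 0)"
    by (intro arg_cong2[of _ _ _ _ "(*)"] sum.cong refl)
      (simp add: dpow_series_deriv_mult_delta in_vars_keys[OF assms] mult.assoc)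
  finally show ?thesis .
qed

lemma lookup_gauge_top:
  assumes "g \<noteq> 0" "in_vars n R" "\<forall>J\<in>Poly_Mapping.keys R. mdeg J \<le> m" "m \<le> mdeg P"
  shows "Poly_Mapping.lookup (gauge g R) P = Poly_Mapping.lookup R P"
proof -
  have "P \<in> below J \<longleftrightarrow> J = P" if "J \<in> Poly_Mapping.keys R" for J
    using below_eq_of_mdeg_le[of P J] below_refl[of J] assms(3,4) that by force
  then have "Poly_Mapping.lookup (gauge g R) P = inverse g * (\<Sum>J\<in>Poly_Mapping.keys R.
      if J = P then Poly_Mapping.lookup R J * g else 0)"
    unfolding lookup_gauge[OF assms(2)] by (intro arg_cong2[of _ _ _ _ "(*)"] sum.cong refl) auto
  then show ?thesis using assms(1) by (simp add: in_keys_iff)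
qed

lemma mdeg_le_of_in_keys_gauge:
  assumes "in_vars n R" "P \<in> Poly_Mapping.keys (gauge g R)"
  shows "\<exists>J\<in>Poly_Mapping.keys R. mdeg P \<le> mdeg J"
proof (rule ccontr)
  assume "\<not> ?thesis"
  then have "P \<notin> below J" if "J \<in> Poly_Mapping.keys R" for J
    using mdeg_le_below that by force
  then have "Poly_Mapping.lookup (gauge g R) P = 0"
    unfolding lookup_gauge[OF assms(1)] by simp
  with assms(2) show False by (simp add: in_keys_iff)
qed

lemma ord_gauge_Sym_gauge:
  assumes "g \<noteq> 0" "in_vars n R"
  shows "ord (gauge g R) = ord R \<and> Sym (gauge g R) = Sym R"
proof (cases "ord R")
  case None
  then have "R = 0" by (simp add: ord_def split: if_splits)
  moreover from this have "gauge g R = 0"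
    using lookup_gauge_top[OF assms, of 0] by (intro poly_mapping_eqI) simp
  ultimately show ?thesis by simp
next
  case (Some m)
  then have R: "\<forall>J\<in>Poly_Mapping.keys R. mdeg J \<le> m" by (simp add: ord_eq_Some_iff)
  then have "\<forall>J\<in>Poly_Mapping.keys (gauge g R). mdeg J \<le> m"
    using mdeg_le_of_in_keys_gauge[OF assms(2)] order_trans by blast
  from ord_Sym_eq_if_top_eq[OF Some this lookup_gauge_top[OF assms R]] show ?thesis by simp
qed

lemma has_factorization_gauge:
  assumes "g \<noteq> 0" "has_factorization n d Ss M"
  shows "has_factorization n d Ss (gauge g M)"
proof -
  obtain Fs where Fs: "length Fs = length Ss" "\<forall>F\<in>set Fs. in_vars n F"
    "\<forall>i<length Ss. Sym (Fs ! i) = Ss ! i" "M = foldr (op_comp d) Fs (op_const 1)"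
    using assms(2) unfolding has_factorization_def by blast
  show ?thesis
    unfolding has_factorization_def
  proof (intro exI conjI)
    show "length (map (gauge g) Fs) = length Ss" using Fs by simp
    show "\<forall>F\<in>set (map (gauge g) Fs). in_vars n F" using Fs in_vars_gauge by auto
    show "\<forall>i<length Ss. Sym (map (gauge g) Fs ! i) = Ss ! i"
      using Fs ord_gauge_Sym_gauge[OF assms(1)] by simp
    show "gauge g M = foldr (op_comp d) (map (gauge g) Fs) (op_const 1)"
      using Fs gauge_foldr_op_comp[OF assms(1)] by simp
  qed
qed

lemma common_obstacle_gauge:
  assumes g: "g \<noteq> 0" and L: "in_vars n L" and R: "common_obstacle n d Ss L R"
  shows "common_obstacle n d Ss (gauge g L) (gauge g R)"
proof -
  have Rv: "in_vars n R" and Rf: "has_factorization n d Ss (L - R)"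
    and Rmin: "\<And>R'. in_vars n R' \<Longrightarrow> has_factorization n d Ss (L - R') \<Longrightarrow> ord R \<le> ord R'"
    using R unfolding common_obstacle_def by auto
  show ?thesis
    unfolding common_obstacle_def
  proof (intro conjI allI impI)
    show "in_vars n (gauge g R)" by (rule in_vars_gauge[OF Rv])
    show "has_factorization n d Ss (gauge g L - gauge g R)"
      using has_factorization_gauge[OF g Rf] by (simp only: gauge_diff[OF L Rv])
    fix R' assume "in_vars n R' \<and> has_factorization n d Ss (gauge g L - R')"
    then have R'v: "in_vars n R'" and R'f: "has_factorization n d Ss (gauge g L - R')" by auto
    have "gauge (inverse g) (gauge g L - R') = L - gauge (inverse g) R'"
      by (simp only: gauge_diff[OF in_vars_gauge[OF L] R'v] gauge_inverse_gauge[OF g L])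
    moreover have "has_factorization n d Ss (gauge (inverse g) (gauge g L - R'))"
      using has_factorization_gauge[OF _ R'f] g by simp
    ultimately have "ord R \<le> ord (gauge (inverse g) R')"
      using Rmin in_vars_gauge[OF R'v] by simp
    also have "\<dots> = ord R'"
      using ord_gauge_Sym_gauge[OF _ R'v] g by simp
    finally show "ord (gauge g R) \<le> ord R'"
      using ord_gauge_Sym_gauge[OF g Rv] by simp
  qed
qed

lemma obstacle_classes_subset_gauge:
  assumes "g \<noteq> 0" "in_vars n L"
  shows "obstacle_classes n d Ss L \<subseteq> obstacle_classes n d Ss (gauge g L)"
proof
  fix X assume "X \<in> obstacle_classes n d Ss L"
  then obtain R where X: "X = obstacle_class n Ss (Sym R)" and R: "common_obstacle n d Ss L R"
    unfolding obstacle_classes_def by blast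
  have "Sym (gauge g R) = Sym R"
    using ord_gauge_Sym_gauge[OF assms(1)] R unfolding common_obstacle_def by blast
  with X common_obstacle_gauge[OF assms R] show "X \<in> obstacle_classes n d Ss (gauge g L)"
    unfolding obstacle_classes_def by (metis (mono_tags, lifting) mem_Collect_eq)
qed

end

theorem mainTheorem9:
  fixes n :: nat and d :: "nat \<Rightarrow> 'a::field \<Rightarrow> 'a"
    and L :: "'a diffop" and Ss :: "'a mpoly list" and g :: 'a
  assumes "commuting_derivations n d"
    and "in_vars n L"
    and "\<forall>S\<in>set Ss. in_vars n S \<and> homogeneous S"
    and "Sym L = prod_list Ss"
    and "g \<noteq> 0"
  shows "Sym (op_comp d (op_const (inverse g)) (op_comp d L (op_const g))) = Sym L
    \<and> obstacle_classes n d Ss (op_comp d (op_const (inverse g)) (op_comp d L (op_const g)))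
        = obstacle_classes n d Ss L"
proof -
  interpret comm_diff_field n d by (rule comm_diff_field.intro) (rule assms(1))
  note L = assms(2) and g = assms(5)
  have "obstacle_classes n d Ss (gauge g L) \<subseteq> obstacle_classes n d Ss L"
    using obstacle_classes_subset_gauge[of "inverse g" "gauge g L"] in_vars_gauge[OF L]
      gauge_inverse_gauge[OF g L] g by simp
  then have "obstacle_classes n d Ss (gauge g L) = obstacle_classes n d Ss L"
    using obstacle_classes_subset_gauge[OF g L] by blast
  then show ?thesis
    using ord_gauge_Sym_gauge[OF g L] unfolding gauge_def by simp
qed

end
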